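(* Let two groups of positive integer moduli be given: Group $j$ ($j=1,2$) consists of $L_j\ge1$ moduli $0<M_{j,1}<\dots<M_{j,L_j}$; put $\delta_j=\operatorname{lcm}(M_{j,1},\dots,M_{j,L_j})$ and assume $\delta_1\ne\delta_2$. Let $N$ be an integer with $0\le N<\operatorname{lcm}(\delta_1,\delta_2)$, let $r_{j,i}$ be the remainder of $N$ modulo $M_{j,i}$ and $n_{j,i}=(N-r_{j,i})/M_{j,i}$. Let $\tilde r_{j,i}$ be integers with $0\le\tilde r_{j,i}\le M_{j,i}-1$ and $|\tilde r_{j,i}-r_{j,i}|\le\tau_j$ for all $i$, where $$\tau_j<\min(G_j,G)\quad (j=1,2),$$ with $G_j=\max_{1\le i\le L_j}\min_{q\ne i}\gcd(M_{j,i},M_{j,q})/4$ if $L_j\ge2$, $G_j=M_{j,1}/4$ if $L_j=1$, and $G=\gcd(\delta_1,\delta_2)/4$. Then the two-stage algorithm (described in the context) outputs $\hat n_{j,i}=n_{j,i}$ for all $1\le i\le L_j$, $j=1,2$, and its estimate $\hat N$ satisfies $$|\hat N-N|\le\left[\frac{L_1\tau_1+L_2\tau_2}{L_1+L_2}\right].$$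
   Context: For $x\in\mathbb R$, $[x]$ denotes the unique integer with $-1/2\le x-[x]<1/2$. Single-stage algorithm $\mathcal A$: for pairwise distinct positive integers $P_1,\dots,P_m$ ($m\ge2$), a reference index $k$ and integers $x_1,\dots,x_m$: for $i\ne k$ put $m_{ki}=\gcd(P_k,P_i)$, $\Gamma_{ki}=P_k/m_{ki}$, $\Gamma_{ik}=P_i/m_{ki}$, $\hat q_{ik}=[(x_i-x_k)/m_{ki}]$, let $\bar\Gamma_{ki}$ be an inverse of $\Gamma_{ki}$ modulo $\Gamma_{ik}$ and $\hat\xi_{ik}\equiv\hat q_{ik}\bar\Gamma_{ki}\pmod{\Gamma_{ik}}$, $0\le\hat\xi_{ik}<\Gamma_{ik}$; let $\hat n_k$ be the least nonnegative $y$ with $y\equiv\hat\xi_{ik}\pmod{\Gamma_{ik}}$ for all $i\ne k$ (the algorithm fails if none exists), and $\hat n_i=(\hat n_k\Gamma_{ki}-\hat q_{ik})/\Gamma_{ik}$ for $i\ne k$. Two-stage algorithm: Stage 1: for each group $j$, if $L_j\ge2$ apply $\mathcal A$ to $M_{j,1},\dots,M_{j,L_j}$ with inputs $\tilde r_{j,1},\dots,\tilde r_{j,L_j}$ and a reference index $k_j$ attaining $\max_i\min_{q\ne i}\gcd(M_{j,i},M_{j,q})$, obtaining $\hat K_{j,1},\dots,\hat K_{j,L_j}$; if $L_j=1$ set $\hat K_{j,1}=0$. Put $\hat N_j=[\frac1{L_j}\sum_{i=1}^{L_j}(\hat K_{j,i}M_{j,i}+\tilde r_{j,i})]$. Stage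 2: apply $\mathcal A$ to the moduli $\delta_1,\delta_2$ with inputs $\hat N_1,\hat N_2$ (any reference index), obtaining $\hat l_1,\hat l_2$. Output $\hat n_{j,i}=\hat l_j\delta_j/M_{j,i}+\hat K_{j,i}$ and $\hat N=[\frac1{L_1+L_2}\sum_{j=1}^2\sum_{i=1}^{L_j}(\hat n_{j,i}M_{j,i}+\tilde r_{j,i})]$. *)

theory Defs
  imports "HOL-Number_Theory.Number_Theory"
begin

text \<open>Rounding [x]: the unique integer with -1/2 \<le> x - [x] < 1/2.\<close>
definition rnd :: "real \<Rightarrow> int" where
  "rnd x = \<lfloor>x + 1/2\<rfloor>"

text \<open>Single-stage algorithm A. Indices are 1..m; P i are the moduli, k the
  reference index, x i the inputs. Returns None if the algorithm fails.\<close>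
definition alg_A :: "nat \<Rightarrow> (nat \<Rightarrow> int) \<Rightarrow> nat \<Rightarrow> (nat \<Rightarrow> int) \<Rightarrow> (nat \<Rightarrow> int) option" where
  "alg_A m P k x = (let
     mm = (\<lambda>i. gcd (P k) (P i));
     Gki = (\<lambda>i. P k div mm i);
     Gik = (\<lambda>i. P i div mm i);
     q = (\<lambda>i. rnd (real_of_int (x i - x k) / real_of_int (mm i)));
     ginv = (\<lambda>i. SOME b. [Gki i * b = 1] (mod Gik i));
     xi = (\<lambda>i. (q i * ginv i) mod Gik i);
     S = {y::nat. \<forall>i\<in>{1..m} - {k}. [int y = xi i] (mod Gik i)}
   in if S = {} then None else
     (let nk = int (LEAST y. y \<in> S) in
      Some (\<lambda>i. if i = k then nk else (nk * Gki i - q i) div Gik i)))"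

definition mingcd :: "(nat \<Rightarrow> int) \<Rightarrow> nat \<Rightarrow> nat \<Rightarrow> int" where
  "mingcd Mj Lj i = Min {gcd (Mj i) (Mj q) | q. q \<in> {1..Lj} \<and> q \<noteq> i}"

definition delta :: "(nat \<Rightarrow> nat \<Rightarrow> int) \<Rightarrow> (nat \<Rightarrow> nat) \<Rightarrow> nat \<Rightarrow> int" where
  "delta M L j = Lcm (M j ` {1..L j})"

text \<open>Groups j = 1,2; group j has moduli M j 1..M j (L j),
  inputs rt j i, stage-1 reference index kref j, stage-2 reference index kk.\<close>
definition two_stage :: "(nat \<Rightarrow> nat) \<Rightarrow> (nat \<Rightarrow> nat \<Rightarrow> int) \<Rightarrow> (nat \<Rightarrow> nat \<Rightarrow> int)
    \<Rightarrow> (nat \<Rightarrow> nat) \<Rightarrow> nat \<Rightarrow> ((nat \<Rightarrow> nat \<Rightarrow> int) \<times> int) option" where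
  "two_stage L M rt kref kk = (let
     Khat = (\<lambda>j. if L j \<ge> 2 then alg_A (L j) (M j) (kref j) (rt j) else Some (\<lambda>_. 0))
   in if Khat 1 = None \<or> Khat 2 = None then None else
   (let K = (\<lambda>j. the (Khat j));
        Nh = (\<lambda>j. rnd ((\<Sum>i=1..L j. real_of_int (K j i * M j i + rt j i)) / real (L j)));
        st2 = alg_A 2 (delta M L) kk Nh
    in if st2 = None then None else
    (let l = the st2;
         nh = (\<lambda>j i. l j * delta M L j div M j i + K j i);
         Nhat = rnd ((\<Sum>j\<in>{1,2}. \<Sum>i=1..L j. real_of_int (nh j i * M j i + rt j i))
                     / real (L 1 + L 2))
     in Some (nh, Nhat))))"

end

theory Submission
  imports Defs
begin

text \<open>
  Put \<open>X\<^sub>j = N mod \<delta>\<^sub>j\<close>. Inside group \<open>j\<close> two residue errors differ by less than half the gcd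
  of the reference modulus with any other modulus, so the rounding step of algorithm A recovers the
  differences of the quotients of \<open>X\<^sub>j\<close> exactly; as \<open>X\<^sub>j\<close> lies below the lcm of the group, its
  quotient by the reference modulus is then the least solution of the congruences A solves. Hence
  stage 1 returns the folded quotients \<open>X\<^sub>j div M\<^sub>j\<^sub>,\<^sub>i\<close>, and the rounded mean of the reconstructions
  \<open>K M + r\<close> is an integer within \<open>\<lfloor>\<tau>\<^sub>j\<rfloor> < gcd \<delta>\<^sub>1 \<delta>\<^sub>2 / 4\<close> of \<open>X\<^sub>j\<close>. The same argument for the two
  moduli \<open>\<delta>\<^sub>j\<close> gives \<open>N div \<delta>\<^sub>j\<close> in stage 2, which combines with the folded quotients to
  \<open>N div M\<^sub>j\<^sub>,\<^sub>i\<close>; the final mean then deviates from \<open>N\<close> only by the mean residue error.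
\<close>

lemma rnd_int_add: "rnd (real_of_int a + y) = a + rnd y"
  unfolding rnd_def using floor_add_int[of "y + 1/2" a] by (simp add: add_ac)

lemma rnd_of_int [simp]: "rnd (real_of_int a) = a"
  unfolding rnd_def by (simp add: floor_eq_iff)

lemma rnd_mono: "x \<le> y \<Longrightarrow> rnd x \<le> rnd y"
  unfolding rnd_def by (simp add: floor_mono)

lemma rnd_eq_0: "-1/2 \<le> y \<Longrightarrow> y < 1/2 \<Longrightarrow> rnd y = 0"
  unfolding rnd_def by (simp add: floor_eq_iff)

lemma abs_rnd_le: assumes "\<bar>y\<bar> \<le> B" shows "\<bar>rnd y\<bar> \<le> rnd B"
proof -
  have "rnd y \<le> rnd B" "rnd (-B) \<le> rnd y" using assms by (auto intro: rnd_mono)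
  moreover have "- rnd B \<le> rnd (-B)"
    unfolding rnd_def using real_of_int_floor_add_one_gt[of "B + 1/2"]
    by (simp only: le_floor_iff)
  ultimately show ?thesis by linarith
qed

lemma abs_rnd_sub_le:
  assumes "\<bar>y - real_of_int X\<bar> \<le> B" shows "\<bar>rnd y - X\<bar> \<le> rnd B"
  using abs_rnd_le[OF assms] rnd_int_add[of X "y - real_of_int X"] by simp

lemma rnd_div_near:
  fixes m q d :: int
  assumes "0 < m" "2 * \<bar>d\<bar> < m"
  shows "rnd (real_of_int (m * q + d) / real_of_int m) = q"
proof -
  have "2 * \<bar>real_of_int d\<bar> < real_of_int m" using assms(2) by linarith
  then have "-1/2 \<le> real_of_int d / real_of_int m" "real_of_int d / real_of_int m < 1/2"
    using assms(1) by (auto simp: field_simps abs_less_iff)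
  moreover have "real_of_int (m * q + d) / real_of_int m = real_of_int q + real_of_int d / real_of_int m"
    using assms(1) by (simp add: field_simps)
  ultimately show ?thesis by (simp add: rnd_int_add rnd_eq_0)
qed

lemma abs_rnd_mean_sub_le:
  fixes a B :: "'a \<Rightarrow> real"
  assumes "finite A" "A \<noteq> {}" "\<forall>x\<in>A. \<bar>a x - real_of_int X\<bar> \<le> B x"
  shows "\<bar>rnd ((\<Sum>x\<in>A. a x) / real (card A)) - X\<bar> \<le> rnd ((\<Sum>x\<in>A. B x) / real (card A))"
proof (rule abs_rnd_sub_le)
  have c: "real (card A) > 0" using assms(1,2) by (simp add: card_gt_0_iff)
  have "\<bar>(\<Sum>x\<in>A. a x) - real (card A) * real_of_int X\<bar> = \<bar>\<Sum>x\<in>A. a x - real_of_int X\<bar>"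
    by (simp add: sum_subtractf)
  also have "\<dots> \<le> (\<Sum>x\<in>A. \<bar>a x - real_of_int X\<bar>)" by (rule sum_abs)
  also have "\<dots> \<le> (\<Sum>x\<in>A. B x)" using assms(3) by (intro sum_mono) auto
  finally have "\<bar>(\<Sum>x\<in>A. a x) - real (card A) * real_of_int X\<bar> \<le> (\<Sum>x\<in>A. B x)" .
  moreover have "(\<Sum>x\<in>A. a x) / real (card A) - real_of_int X
      = ((\<Sum>x\<in>A. a x) - real (card A) * real_of_int X) / real (card A)"
    using c by (simp add: diff_divide_distrib)
  ultimately show "\<bar>(\<Sum>x\<in>A. a x) / real (card A) - real_of_int X\<bar> \<le> (\<Sum>x\<in>A. B x) / real (card A)"
    using c by (simp add: divide_right_mono)
qed

lemma rnd_pooled_mean_error: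
  fixes a :: "nat \<Rightarrow> nat \<Rightarrow> real" and \<tau> :: "nat \<Rightarrow> real" and L :: "nat \<Rightarrow> nat"
  assumes "0 < L 1 + L 2" and err: "\<forall>j\<in>{1,2}. \<forall>i\<in>{1..L j}. \<bar>a j i - real_of_int N\<bar> \<le> \<tau> j"
  shows "\<bar>rnd ((\<Sum>j\<in>{1,2}. \<Sum>i=1..L j. a j i) / real (L 1 + L 2)) - N\<bar>
    \<le> rnd ((real (L 1) * \<tau> 1 + real (L 2) * \<tau> 2) / real (L 1 + L 2))"
proof -
  define A where "A = Sigma {1,2::nat} (\<lambda>j. {1..L j})"
  have card_A: "card A = L 1 + L 2" unfolding A_def by simp
  then have "A \<noteq> {}" using assms(1) by auto
  have "\<bar>rnd ((\<Sum>(j, i)\<in>A. a j i) / real (card A)) - N\<bar> \<le> rnd ((\<Sum>(j, i)\<in>A. \<tau> j) / real (card A))"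
    using \<open>A \<noteq> {}\<close> err by (intro abs_rnd_mean_sub_le) (auto simp: A_def)
  moreover have "(\<Sum>(j, i)\<in>A. f j i) = (\<Sum>j\<in>{1,2}. \<Sum>i=1..L j. f j i)" for f :: "nat \<Rightarrow> nat \<Rightarrow> real"
    unfolding A_def by (rule sum.Sigma[symmetric]) auto
  ultimately show ?thesis unfolding card_A by simp
qed

lemma four_mult_floor_less:
  fixes g :: int
  assumes "\<tau> < real_of_int g / 4"
  shows "4 * \<lfloor>\<tau>\<rfloor> < g"
proof -
  have "real_of_int (4 * \<lfloor>\<tau>\<rfloor>) < real_of_int g"
    using assms of_int_floor_le[of \<tau>] by (simp only: of_int_mult of_int_numeral)
  then show ?thesis by (simp only: of_int_less_iff)
qed

lemma pos_of_strict_incr: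
  fixes f :: "nat \<Rightarrow> int"
  assumes "0 < f 1" "\<forall>i. 1 \<le> i \<and> i < n \<longrightarrow> f i < f (i + 1)" "i \<in> {1..n}"
  shows "0 < f i"
  using assms(3)
proof (induction i)
  case (Suc i)
  show ?case
  proof (cases "i = 0")
    case False
    then have "i \<in> {1..n}" "f i < f (i + 1)" using Suc.prems assms(2) by auto
    then show ?thesis using Suc.IH by simp
  qed (use assms(1) in simp)
qed simp

lemma div_mult_div_add_mod_div:
  fixes a b n :: int
  assumes "b dvd a"
  shows "n div a * a div b + n mod a div b = n div b"
proof (cases "b = 0")
  case False
  obtain c where "a = b * c" using assms by blast
  have "n = n mod a + n div a * c * b"
    using mult_div_mod_eq[of a n] \<open>a = b * c\<close> by (simp add: algebra_simps)
  then have "n div b = (n mod a + n div a * c * b) div b" by simp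
  also have "\<dots> = n mod a div b + n div a * c" using False by simp
  also have "n div a * c = n div a * a div b" using False \<open>a = b * c\<close> by simp
  finally show ?thesis by simp
qed simp

lemma abs_div_mult_add_sub_le:
  fixes M N r :: int
  assumes "real_of_int \<bar>r - N mod M\<bar> \<le> \<tau>"
  shows "\<bar>real_of_int (N div M * M + r) - real_of_int N\<bar> \<le> \<tau>"
proof -
  have "N div M * M + r - N = r - N mod M" using minus_mod_eq_div_mult[of N M] by simp
  then have "real_of_int (N div M * M + r) - real_of_int N = real_of_int (r - N mod M)"
    by (simp only: of_int_diff[symmetric])
  then show ?thesis unfolding of_int_abs[symmetric] using assms by simp
qed

lemma Lcm_image_pos:
  fixes M :: "nat \<Rightarrow> int"
  assumes "\<forall>i\<in>I. 0 < M i" "finite I"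
  shows "0 < Lcm (M ` I)"
proof -
  have "Lcm (M ` I) \<noteq> 0" using assms by (auto simp: Lcm_0_iff)
  then show ?thesis using Lcm_int_greater_eq_0[of "M ` I"] by linarith
qed

lemma mod_Lcm_image_mod:
  fixes M :: "nat \<Rightarrow> int"
  assumes "i \<in> I"
  shows "N mod Lcm (M ` I) mod M i = N mod M i"
  using assms by (intro mod_mod_cancel dvd_Lcm) simp

lemma cong_div_gcd_imp_dvd:
  fixes p p' a b :: int
  assumes "[a = b] (mod (p' div gcd p p'))"
  shows "p' dvd p * (b - a)"
proof -
  define g where "g = gcd p p'"
  obtain t where t: "b - a = p' div g * t"
    using assms unfolding g_def by (metis cong_iff_dvd_diff cong_sym dvd_def)
  have "g * (p div g) = p" "g * (p' div g) = p'" by (simp_all add: g_def)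
  then have "p * (b - a) = p' * (p div g * t)" unfolding t by (metis mult.assoc mult.left_commute)
  then show ?thesis by simp
qed

lemma least_cong_solution:
  fixes P :: "nat \<Rightarrow> int" and X y :: int
  assumes "k \<in> I" "0 < P k" "0 \<le> X" "X < Lcm (P ` I)" "0 \<le> y"
    and cong: "\<forall>i\<in>I - {k}. [y = X div P k] (mod (P i div gcd (P k) (P i)))"
  shows "X div P k \<le> y"
proof (rule ccontr)
  assume "\<not> X div P k \<le> y"
  then have pos: "0 < P k * (X div P k - y)" using assms(2) by simp
  have "P i dvd P k * (X div P k - y)" if "i \<in> I" for i
    using that cong cong_div_gcd_imp_dvd by (cases "i = k") auto
  then have "Lcm (P ` I) dvd P k * (X div P k - y)" by (auto simp: Lcm_dvd_iff)
  then have "Lcm (P ` I) \<le> P k * (X div P k - y)" using pos by (rule zdvd_imp_le)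
  also have "\<dots> \<le> P k * (X div P k)" using assms(2,5) by (simp add: algebra_simps)
  also have "\<dots> \<le> X" using assms(2) mult_div_mod_eq[of "P k" X] pos_mod_sign[of "P k" X] by linarith
  finally show False using assms(4) by simp
qed

lemma alg_A_correct:
  fixes P x :: "nat \<Rightarrow> int" and X :: int
  assumes k: "k \<in> {1..m}" and P_pos: "\<forall>i\<in>{1..m}. 0 < P i"
    and X_range: "0 \<le> X" "X < Lcm (P ` {1..m})"
    and err: "\<forall>i\<in>{1..m} - {k}. 2 * \<bar>(x i - X mod P i) - (x k - X mod P k)\<bar> < gcd (P k) (P i)"
  shows "\<exists>f. alg_A m P k x = Some f \<and> (\<forall>i\<in>{1..m}. f i = X div P i)"
proof -
  define mm where "mm = (\<lambda>i. gcd (P k) (P i))"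
  define Gki where "Gki = (\<lambda>i. P k div mm i)"
  define Gik where "Gik = (\<lambda>i. P i div mm i)"
  define q where "q = (\<lambda>i. rnd (real_of_int (x i - x k) / real_of_int (mm i)))"
  define ginv where "ginv = (\<lambda>i. SOME b. [Gki i * b = 1] (mod Gik i))"
  define xi where "xi = (\<lambda>i. (q i * ginv i) mod Gik i)"
  define S where "S = {y::nat. \<forall>i\<in>{1..m} - {k}. [int y = xi i] (mod Gik i)}"
  define K where "K = (\<lambda>i. X div P i)"
  have alg_A_unfold: "alg_A m P k x = (if S = {} then None else Some (\<lambda>i. if i = k
      then int (LEAST y. y \<in> S) else (int (LEAST y. y \<in> S) * Gki i - q i) div Gik i))"
    unfolding alg_A_def Let_def S_def xi_def q_def ginv_def Gik_def Gki_def mm_def by (rule refl)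
  have Pk: "0 < P k" using k P_pos by blast
  have mm_pos: "0 < mm i" for i unfolding mm_def using Pk by simp
  have Pk_eq: "P k = mm i * Gki i" and Pi_eq: "P i = mm i * Gik i" for i
    unfolding Gki_def Gik_def mm_def by simp_all
  have K_Gik: "K k * Gki i - q i = K i * Gik i" if i: "i \<in> {1..m} - {k}" for i
  proof -
    have "mm i * (K k * Gki i - K i * Gik i) = K k * P k - K i * P i"
      by (simp only: Pk_eq[of i] Pi_eq[of i] algebra_simps)
    moreover have X_eq: "X = K j * P j + X mod P j" for j unfolding K_def by simp
    ultimately have "x i - x k = mm i * (K k * Gki i - K i * Gik i) + ((x i - X mod P i) - (x k - X mod P k))"
      using X_eq[of i] X_eq[of k] by linarith
    moreover have "2 * \<bar>(x i - X mod P i) - (x k - X mod P k)\<bar> < mm i"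
      using err i unfolding mm_def by blast
    ultimately have "q i = K k * Gki i - K i * Gik i"
      unfolding q_def by (simp only: rnd_div_near[OF mm_pos])
    then show ?thesis by simp
  qed
  have xi_cong: "[xi i = K k] (mod Gik i)" if i: "i \<in> {1..m} - {k}" for i
  proof -
    have "coprime (Gki i) (Gik i)"
      unfolding Gki_def Gik_def mm_def using Pk by (intro div_gcd_coprime) simp
    then have "\<exists>b. [Gki i * b = 1] (mod Gik i)" by (rule cong_solve_coprime_int)
    then have inv: "[Gki i * ginv i = 1] (mod Gik i)" unfolding ginv_def by (rule someI_ex)
    have "[q i = K k * Gki i] (mod Gik i)"
      using K_Gik[OF i] by (simp add: cong_iff_dvd_diff algebra_simps)
    then have "[q i * ginv i = K k * (Gki i * ginv i)] (mod Gik i)"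
      by (metis cong_scalar_right mult.assoc)
    also have "[K k * (Gki i * ginv i) = K k * 1] (mod Gik i)" using inv by (rule cong_scalar_left)
    finally show ?thesis unfolding xi_def by simp
  qed
  have K_nonneg: "0 \<le> K k" unfolding K_def using X_range(1) Pk by (simp add: div_int_pos_iff)
  have K_in_S: "nat (K k) \<in> S" unfolding S_def using xi_cong K_nonneg by (simp add: cong_sym)
  have K_least: "nat (K k) \<le> y" if y: "y \<in> S" for y
  proof -
    have "[int y = X div P k] (mod (P i div gcd (P k) (P i)))" if i: "i \<in> {1..m} - {k}" for i
    proof -
      have "[int y = xi i] (mod Gik i)" using y i unfolding S_def by blast
      then have "[int y = K k] (mod Gik i)" using xi_cong[OF i] by (rule cong_trans)
      then show ?thesis unfolding K_def Gik_def mm_def .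
    qed
    then have "K k \<le> int y" unfolding K_def by (intro least_cong_solution[OF k Pk X_range]) auto
    then show ?thesis by simp
  qed
  have "(LEAST y. y \<in> S) = nat (K k)" using K_in_S K_least by (intro Least_equality)
  moreover have "(K k * Gki i - q i) div Gik i = K i" if "i \<in> {1..m} - {k}" for i
  proof -
    have "0 < mm i * Gik i" using P_pos that unfolding Pi_eq[of i, symmetric] by blast
    then have "0 < Gik i" using mm_pos zero_less_mult_pos by blast
    then show ?thesis using K_Gik[OF that] by simp
  qed
  ultimately show ?thesis
    unfolding alg_A_unfold using K_in_S K_nonneg by (auto simp: K_def)
qed

lemma mingcd_le_gcd:
  assumes "q \<in> {1..L}" "q \<noteq> i"
  shows "mingcd M L i \<le> gcd (M i) (M q)"
  unfolding mingcd_def using assms by (intro Min_le) auto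

definition stage1 :: "nat \<Rightarrow> (nat \<Rightarrow> int) \<Rightarrow> nat \<Rightarrow> (nat \<Rightarrow> int) \<Rightarrow> (nat \<Rightarrow> int) option" where
  "stage1 L M kref rt = (if 2 \<le> L then alg_A L M kref rt else Some (\<lambda>_. 0))"

definition group_mean :: "nat \<Rightarrow> (nat \<Rightarrow> int) \<Rightarrow> (nat \<Rightarrow> int) \<Rightarrow> (nat \<Rightarrow> int) \<Rightarrow> int" where
  "group_mean L M K rt = rnd ((\<Sum>i=1..L. real_of_int (K i * M i + rt i)) / real L)"

lemma stage1_correct:
  fixes M rt :: "nat \<Rightarrow> int" and N :: int and \<tau> :: real
  assumes L: "1 \<le> L" and M_pos: "\<forall>i\<in>{1..L}. 0 < M i"
    and err: "\<forall>i\<in>{1..L}. real_of_int \<bar>rt i - N mod M i\<bar> \<le> \<tau>"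
    and kref: "2 \<le> L \<Longrightarrow> kref \<in> {1..L} \<and> 4 * \<tau> < real_of_int (mingcd M L kref)"
  shows "\<exists>K. stage1 L M kref rt = Some K \<and> (\<forall>i\<in>{1..L}. K i = N mod Lcm (M ` {1..L}) div M i)"
proof -
  define X where "X = N mod Lcm (M ` {1..L})"
  have X_range: "0 \<le> X" "X < Lcm (M ` {1..L})"
    unfolding X_def using Lcm_image_pos[OF M_pos] by simp_all
  have X_mod: "X mod M i = N mod M i" if "i \<in> {1..L}" for i
    unfolding X_def using that by (rule mod_Lcm_image_mod)
  show ?thesis
  proof (cases "2 \<le> L")
    case True
    with kref have kr: "kref \<in> {1..L}" and gap: "4 * \<tau> < real_of_int (mingcd M L kref)" by auto
    have "\<forall>i\<in>{1..L} - {kref}. 2 * \<bar>(rt i - X mod M i) - (rt kref - X mod M kref)\<bar> < gcd (M kref) (M i)"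
    proof
      fix i assume i: "i \<in> {1..L} - {kref}"
      have "real_of_int \<bar>rt q - X mod M q\<bar> \<le> \<tau>" if "q \<in> {1..L}" for q
        using err that X_mod[OF that] by simp
      from this[of i] this[of kref]
      have "real_of_int (2 * (\<bar>rt i - X mod M i\<bar> + \<bar>rt kref - X mod M kref\<bar>)) \<le> 4 * \<tau>"
        using i kr by simp
      then have "real_of_int (2 * \<bar>(rt i - X mod M i) - (rt kref - X mod M kref)\<bar>) \<le> 4 * \<tau>"
        by (smt (verit) abs_triangle_ineq4 of_int_le_iff)
      also have "\<dots> < real_of_int (mingcd M L kref)" by (rule gap)
      also have "\<dots> \<le> real_of_int (gcd (M kref) (M i))" using i by (simp add: mingcd_le_gcd)
      finally show "2 * \<bar>(rt i - X mod M i) - (rt kref - X mod M kref)\<bar> < gcd (M kref) (M i)"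
        by linarith
    qed
    then show ?thesis using alg_A_correct[OF kr M_pos X_range] True unfolding X_def stage1_def by simp
  next
    case False
    then have "L = 1" using L by simp
    then have "X div M i = 0" if "i \<in> {1..L}" for i
      using that X_range M_pos by simp
    then show ?thesis using False unfolding X_def stage1_def by simp
  qed
qed

lemma stage1_mean_error:
  fixes M K rt :: "nat \<Rightarrow> int" and N :: int and \<tau> :: real
  assumes "1 \<le> L" and K: "\<forall>i\<in>{1..L}. K i = N mod Lcm (M ` {1..L}) div M i"
    and err: "\<forall>i\<in>{1..L}. real_of_int \<bar>rt i - N mod M i\<bar> \<le> \<tau>"
  shows "\<bar>group_mean L M K rt - N mod Lcm (M ` {1..L})\<bar> \<le> \<lfloor>\<tau>\<rfloor>"
proof -
  define X where "X = N mod Lcm (M ` {1..L})"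
  have "\<bar>real_of_int (K i * M i + rt i) - real_of_int X\<bar> \<le> real_of_int \<lfloor>\<tau>\<rfloor>" if i: "i \<in> {1..L}" for i
  proof -
    have "K i * M i = X - X mod M i" using K i unfolding X_def by (simp add: minus_mod_eq_div_mult)
    also have "X mod M i = N mod M i" unfolding X_def using i by (rule mod_Lcm_image_mod)
    finally have "K i * M i + rt i - X = rt i - N mod M i" by simp
    moreover have "\<bar>rt i - N mod M i\<bar> \<le> \<lfloor>\<tau>\<rfloor>" using err i by (simp add: le_floor_iff)
    ultimately show ?thesis by (metis of_int_abs of_int_diff of_int_le_iff)
  qed
  then have "\<bar>rnd ((\<Sum>i=1..L. real_of_int (K i * M i + rt i)) / real (card {1..L})) - X\<bar>
      \<le> rnd ((\<Sum>i=1..L. real_of_int \<lfloor>\<tau>\<rfloor>) / real (card {1..L}))"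
    using \<open>1 \<le> L\<close> by (intro abs_rnd_mean_sub_le) auto
  then show ?thesis using \<open>1 \<le> L\<close> unfolding X_def group_mean_def by simp
qed

lemma stage1_estimate:
  fixes M rt :: "nat \<Rightarrow> int" and N :: int and \<tau> :: real
  assumes L: "1 \<le> L" and M_pos: "\<forall>i\<in>{1..L}. 0 < M i"
    and err: "\<forall>i\<in>{1..L}. real_of_int \<bar>rt i - N mod M i\<bar> \<le> \<tau>"
    and kref: "2 \<le> L \<Longrightarrow> kref \<in> {1..L} \<and> 4 * \<tau> < real_of_int (mingcd M L kref)"
  shows "\<exists>K. stage1 L M kref rt = Some K \<and> (\<forall>i\<in>{1..L}. K i = N mod Lcm (M ` {1..L}) div M i)
    \<and> \<bar>group_mean L M K rt - N mod Lcm (M ` {1..L})\<bar> \<le> \<lfloor>\<tau>\<rfloor>"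
  using stage1_correct[OF assms] stage1_mean_error[OF L _ err] by blast

lemma stage2_correct:
  fixes \<delta> Nh t :: "nat \<Rightarrow> int" and N :: int
  assumes \<delta>_pos: "0 < \<delta> 1" "0 < \<delta> 2" and N_range: "0 \<le> N" "N < lcm (\<delta> 1) (\<delta> 2)"
    and kk: "kk \<in> {1,2}" and err: "\<forall>j\<in>{1,2}. \<bar>Nh j - N mod \<delta> j\<bar> \<le> t j"
    and t: "\<forall>j\<in>{1,2}. 4 * t j < gcd (\<delta> 1) (\<delta> 2)"
  shows "\<exists>l. alg_A 2 \<delta> kk Nh = Some l \<and> (\<forall>j\<in>{1,2}. l j = N div \<delta> j)"
proof -
  have two: "{1..2::nat} = {1,2}" by auto
  have "\<exists>l. alg_A 2 \<delta> kk Nh = Some l \<and> (\<forall>j\<in>{1..2}. l j = N div \<delta> j)"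
  proof (rule alg_A_correct)
    show "kk \<in> {1..2}" "\<forall>i\<in>{1..2}. 0 < \<delta> i" using kk \<delta>_pos two by auto
    show "0 \<le> N" "N < Lcm (\<delta> ` {1..2})" using N_range two by auto
    show "\<forall>i\<in>{1..2} - {kk}. 2 * \<bar>(Nh i - N mod \<delta> i) - (Nh kk - N mod \<delta> kk)\<bar> < gcd (\<delta> kk) (\<delta> i)"
    proof
      fix i assume "i \<in> {1..2} - {kk}"
      then have i: "i \<in> {1,2}" "i \<noteq> kk" by auto
      then have g: "gcd (\<delta> kk) (\<delta> i) = gcd (\<delta> 1) (\<delta> 2)" using kk by (auto simp: gcd.commute)
      have "\<bar>Nh i - N mod \<delta> i\<bar> \<le> t i" "\<bar>Nh kk - N mod \<delta> kk\<bar> \<le> t kk"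
        "4 * t i < gcd (\<delta> 1) (\<delta> 2)" "4 * t kk < gcd (\<delta> 1) (\<delta> 2)"
        using err t i(1) kk by blast+
      then show "2 * \<bar>(Nh i - N mod \<delta> i) - (Nh kk - N mod \<delta> kk)\<bar> < gcd (\<delta> kk) (\<delta> i)"
        unfolding g using abs_triangle_ineq4[of "Nh i - N mod \<delta> i" "Nh kk - N mod \<delta> kk"] by (smt (verit))
    qed
  qed
  then show ?thesis using two by simp
qed

lemma two_stage_eq:
  assumes K: "K = (\<lambda>j. the (stage1 (L j) (M j) (kref j) (rt j)))"
    and "\<forall>j\<in>{1,2}. stage1 (L j) (M j) (kref j) (rt j) \<noteq> None"
    and "alg_A 2 (delta M L) kk (\<lambda>j. group_mean (L j) (M j) (K j) (rt j)) = Some l"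
  shows "two_stage L M rt kref kk = Some ((\<lambda>j i. l j * delta M L j div M j i + K j i),
    rnd ((\<Sum>j\<in>{1,2}. \<Sum>i=1..L j.
      real_of_int ((l j * delta M L j div M j i + K j i) * M j i + rt j i)) / real (L 1 + L 2)))"
  using assms unfolding two_stage_def Let_def stage1_def group_mean_def by auto

lemma two_stage_output_correct:
  fixes L kref :: "nat \<Rightarrow> nat" and M rt :: "nat \<Rightarrow> nat \<Rightarrow> int" and N :: int and \<tau> :: "nat \<Rightarrow> real"
  defines "\<delta> \<equiv> delta M L"
  assumes K: "K = (\<lambda>j. the (stage1 (L j) (M j) (kref j) (rt j)))"
    and stage1: "\<forall>j\<in>{1,2}. stage1 (L j) (M j) (kref j) (rt j) = Some (K j)
      \<and> (\<forall>i\<in>{1..L j}. K j i = N mod \<delta> j div M j i)"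
    and l: "alg_A 2 \<delta> kk (\<lambda>j. group_mean (L j) (M j) (K j) (rt j)) = Some l"
      "\<forall>j\<in>{1,2}. l j = N div \<delta> j"
    and M_pos: "\<forall>j\<in>{1,2}. \<forall>i\<in>{1..L j}. 0 < M j i" and L: "0 < L 1 + L 2"
    and err: "\<forall>j\<in>{1,2}. \<forall>i\<in>{1..L j}. real_of_int \<bar>rt j i - N mod M j i\<bar> \<le> \<tau> j"
  shows "\<exists>nh Nh. two_stage L M rt kref kk = Some (nh, Nh)
    \<and> (\<forall>j\<in>{1,2}. \<forall>i\<in>{1..L j}. nh j i = (N - N mod M j i) div M j i)
    \<and> \<bar>Nh - N\<bar> \<le> rnd ((real (L 1) * \<tau> 1 + real (L 2) * \<tau> 2) / real (L 1 + L 2))"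
proof -
  have nh: "l j * \<delta> j div M j i + K j i = N div M j i" if "j \<in> {1,2}" "i \<in> {1..L j}" for j i
  proof -
    have "M j i dvd \<delta> j" unfolding \<delta>_def delta_def using that by (intro dvd_Lcm) auto
    moreover have "l j = N div \<delta> j" "K j i = N mod \<delta> j div M j i" using l(2) stage1 that by auto
    ultimately show ?thesis using div_mult_div_add_mod_div by simp
  qed
  have "\<forall>j\<in>{1,2}. \<forall>i\<in>{1..L j}.
      \<bar>real_of_int ((l j * \<delta> j div M j i + K j i) * M j i + rt j i) - real_of_int N\<bar> \<le> \<tau> j"
    using err by (simp only: nh abs_div_mult_add_sub_le cong: ball_cong) simp
  then have "\<bar>rnd ((\<Sum>j\<in>{1,2}. \<Sum>i=1..L j.
      real_of_int ((l j * \<delta> j div M j i + K j i) * M j i + rt j i)) / real (L 1 + L 2)) - N\<bar>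
    \<le> rnd ((real (L 1) * \<tau> 1 + real (L 2) * \<tau> 2) / real (L 1 + L 2))"
    using L by (intro rnd_pooled_mean_error) auto
  moreover have "two_stage L M rt kref kk = Some ((\<lambda>j i. l j * \<delta> j div M j i + K j i),
    rnd ((\<Sum>j\<in>{1,2}. \<Sum>i=1..L j.
      real_of_int ((l j * \<delta> j div M j i + K j i) * M j i + rt j i)) / real (L 1 + L 2)))"
    using two_stage_eq[OF K] stage1 l(1) unfolding \<delta>_def by auto
  ultimately show ?thesis using nh M_pos by (auto simp: minus_mod_eq_div_mult)
qed

theorem theorem2:
  fixes L :: "nat \<Rightarrow> nat" and M rt :: "nat \<Rightarrow> nat \<Rightarrow> int"
    and N :: int and \<tau> :: "nat \<Rightarrow> real" and kref :: "nat \<Rightarrow> nat" and kk :: nat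
  assumes L_pos: "\<forall>j\<in>{1,2}. L j \<ge> 1"
    and M_pos: "\<forall>j\<in>{1,2}. 0 < M j 1"
    and M_incr: "\<forall>j\<in>{1,2}. \<forall>i. 1 \<le> i \<and> i < L j \<longrightarrow> M j i < M j (i+1)"
    and delta_ne: "delta M L 1 \<noteq> delta M L 2"
    and N_range: "0 \<le> N" "N < lcm (delta M L 1) (delta M L 2)"
    and rt_range: "\<forall>j\<in>{1,2}. \<forall>i\<in>{1..L j}. 0 \<le> rt j i \<and> rt j i \<le> M j i - 1"
    and rt_err: "\<forall>j\<in>{1,2}. \<forall>i\<in>{1..L j}. real_of_int \<bar>rt j i - N mod M j i\<bar> \<le> \<tau> j"
    and tau_bound: "\<forall>j\<in>{1,2}. \<tau> j < min
        (if L j \<ge> 2 then real_of_int (Max (mingcd (M j) (L j) ` {1..L j})) / 4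
         else real_of_int (M j 1) / 4)
        (real_of_int (gcd (delta M L 1) (delta M L 2)) / 4)"
    and kref_ok: "\<forall>j\<in>{1,2}. L j \<ge> 2 \<longrightarrow> kref j \<in> {1..L j} \<and>
        mingcd (M j) (L j) (kref j) = Max (mingcd (M j) (L j) ` {1..L j})"
    and kk_ok: "kk \<in> {1,2}"
  shows "\<exists>nh Nh. two_stage L M rt kref kk = Some (nh, Nh)
    \<and> (\<forall>j\<in>{1,2}. \<forall>i\<in>{1..L j}. nh j i = (N - N mod M j i) div M j i)
    \<and> \<bar>Nh - N\<bar> \<le> rnd ((real (L 1) * \<tau> 1 + real (L 2) * \<tau> 2) / real (L 1 + L 2))"
proof -
  define \<delta> where "\<delta> = delta M L"
  define K where "K = (\<lambda>j. the (stage1 (L j) (M j) (kref j) (rt j)))"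
  have M_pos': "\<forall>i\<in>{1..L j}. 0 < M j i" if "j \<in> {1,2}" for j
    using pos_of_strict_incr[of "M j" "L j"] M_pos M_incr that by blast
  have stage1: "stage1 (L j) (M j) (kref j) (rt j) = Some (K j)
      \<and> (\<forall>i\<in>{1..L j}. K j i = N mod \<delta> j div M j i)
      \<and> \<bar>group_mean (L j) (M j) (K j) (rt j) - N mod \<delta> j\<bar> \<le> \<lfloor>\<tau> j\<rfloor>" if j: "j \<in> {1,2}" for j
  proof -
    have "1 \<le> L j" "\<forall>i\<in>{1..L j}. real_of_int \<bar>rt j i - N mod M j i\<bar> \<le> \<tau> j"
      "2 \<le> L j \<Longrightarrow> kref j \<in> {1..L j} \<and> 4 * \<tau> j < real_of_int (mingcd (M j) (L j) (kref j))"
      using L_pos rt_err tau_bound kref_ok j by auto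
    from stage1_estimate[OF this(1) M_pos'[OF j] this(2,3)]
    show ?thesis unfolding K_def \<delta>_def delta_def by auto
  qed
  have \<delta>_pos: "0 < \<delta> 1" "0 < \<delta> 2"
    unfolding \<delta>_def delta_def using M_pos' by (auto intro!: Lcm_image_pos)
  have mean_err: "\<forall>j\<in>{1,2}. \<bar>group_mean (L j) (M j) (K j) (rt j) - N mod \<delta> j\<bar> \<le> \<lfloor>\<tau> j\<rfloor>"
    using stage1 by blast
  have "\<forall>j\<in>{1,2}. 4 * \<lfloor>\<tau> j\<rfloor> < gcd (\<delta> 1) (\<delta> 2)"
    using tau_bound unfolding \<delta>_def by (auto intro: four_mult_floor_less)
  from stage2_correct[OF \<delta>_pos N_range[folded \<delta>_def] kk_ok mean_err this]
  obtain l where l: "alg_A 2 \<delta> kk (\<lambda>j. group_mean (L j) (M j) (K j) (rt j)) = Some l"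
      "\<forall>j\<in>{1,2}. l j = N div \<delta> j"
    by blast
  show ?thesis
    using two_stage_output_correct[OF K_def _ l[unfolded \<delta>_def]] stage1 M_pos' L_pos rt_err
    unfolding \<delta>_def by auto
qed

end
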